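(* Let $I,J\in\mathbb C$ with $4I^3-J^2\ne0$. Then the affine subvariety $Z_{I,J}$ of $\mathbb A^5_{\mathbb C}$ (with coordinates $a,b,c,d,e$) defined by \[ I=12ae-3bd+c^2,\qquad J=72ace+9bcd-27ad^2-27b^2e-2c^3 \] contains no lines, i.e. there is no set $\{(\alpha,\beta,\gamma,\delta,\epsilon)+t(A,B,C,D,E): t\in\mathbb C\}$ with $(\alpha,\beta,\gamma,\delta,\epsilon)\in\mathbb C^5$ and $(A,B,C,D,E)\in\mathbb C^5\setminus\{\mathbf 0\}$ contained in $Z_{I,J}$. *)

theory Defs
  imports Complex_Main
begin

type_synonym pt5 = "complex \<times> complex \<times> complex \<times> complex \<times> complex"

definition invI :: "pt5 \<Rightarrow> complex" where
  "invI p = (case p of (a,b,c,d,e) \<Rightarrow> 12*a*e - 3*b*d + c^2)"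

definition invJ :: "pt5 \<Rightarrow> complex" where
  "invJ p = (case p of (a,b,c,d,e) \<Rightarrow>
     72*a*c*e + 9*b*c*d - 27*a*d^2 - 27*b^2*e - 2*c^3)"

definition Zvar :: "complex \<Rightarrow> complex \<Rightarrow> pt5 set" where
  "Zvar I J = {p. invI p = I \<and> invJ p = J}"

definition line5 :: "pt5 \<Rightarrow> pt5 \<Rightarrow> pt5 set" where
  "line5 P V = (case P of (\<alpha>,\<beta>,\<gamma>,\<delta>,\<epsilon>) \<Rightarrow> case V of (A,B,C,D,E) \<Rightarrow>
     {(\<alpha> + t*A, \<beta> + t*B, \<gamma> + t*C, \<delta> + t*D, \<epsilon> + t*E) | t. True})"

end

theory Submission
  imports Defs
begin

text \<open>Read a point (a,b,c,d,e) as the binary quartic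
  a x^4 + b x^3 y + c x^2 y^2 + d x y^3 + e y^4; then I and J are its classical invariants and
  4 I^3 - J^2 is 27 times its discriminant. Along a line P + t V inside Z_{I,J} the invariants
  are polynomials in t with leading coefficients I(V) and J(V), so V is a nullform, i.e. has a
  triple root. The substitutions x \<mapsto> x + l y and x \<leftrightarrow> y preserve I, J and lines, so
  we may assume V = x^3 (A x + B y). Constancy of I and J along the line then forces d = e = 0
  for P, so y^2 divides P and 4 I^3 - J^2 = 0.\<close>

definition line_point :: "pt5 \<Rightarrow> pt5 \<Rightarrow> complex \<Rightarrow> pt5" where
  "line_point P V t = (case P of (a,b,c,d,e) \<Rightarrow> case V of (A,B,C,D,E) \<Rightarrow>
     (a + t*A, b + t*B, c + t*C, d + t*D, e + t*E))"

lemma line5_eq_range: "line5 P V = range (line_point P V)"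
  by (cases P; cases V) (auto simp: line5_def line_point_def)

lemma line_point_0: "line_point P V 0 = P"
  by (cases P; cases V) (simp add: line_point_def)

lemma line5_subset_Zvar_iff:
  "line5 P V \<subseteq> Zvar I J \<longleftrightarrow> (\<forall>t. invI (line_point P V t) = I \<and> invJ (line_point P V t) = J)"
  by (auto simp: line5_eq_range Zvar_def)

text \<open>The coefficients of f(x + l y, y), resp. f(y, x), where f is the quartic encoded by p.\<close>

definition shift_xy :: "complex \<Rightarrow> pt5 \<Rightarrow> pt5" where
  "shift_xy l p = (case p of (a,b,c,d,e) \<Rightarrow> (a, 4*a*l + b, 6*a*l^2 + 3*b*l + c,
      4*a*l^3 + 3*b*l^2 + 2*c*l + d, a*l^4 + b*l^3 + c*l^2 + d*l + e))"

definition swap_xy :: "pt5 \<Rightarrow> pt5" where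
  "swap_xy p = (case p of (a,b,c,d,e) \<Rightarrow> (e,d,c,b,a))"

lemma shift_xy_0 [simp]: "shift_xy 0 p = p"
  by (cases p) (simp add: shift_xy_def)

lemma shift_xy_shift_xy: "shift_xy r (shift_xy l p) = shift_xy (l + r) p"
  by (cases p) (simp add: shift_xy_def algebra_simps power2_eq_square power3_eq_cube power4_eq_xxxx)

lemma invI_shift_xy [simp]: "invI (shift_xy l p) = invI p"
  by (cases p) (simp add: shift_xy_def invI_def algebra_simps power2_eq_square power3_eq_cube power4_eq_xxxx)

lemma invJ_shift_xy [simp]: "invJ (shift_xy l p) = invJ p"
  by (cases p) (simp add: shift_xy_def invJ_def algebra_simps power2_eq_square power3_eq_cube power4_eq_xxxx)

lemma invI_swap_xy [simp]: "invI (swap_xy p) = invI p"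
  by (cases p) (simp add: swap_xy_def invI_def algebra_simps)

lemma invJ_swap_xy [simp]: "invJ (swap_xy p) = invJ p"
  by (cases p) (simp add: swap_xy_def invJ_def algebra_simps power2_eq_square)

lemma shift_xy_line_point: "shift_xy l (line_point P V t) = line_point (shift_xy l P) (shift_xy l V) t"
  by (cases P; cases V) (simp add: shift_xy_def line_point_def algebra_simps)

lemma swap_xy_line_point: "swap_xy (line_point P V t) = line_point (swap_xy P) (swap_xy V) t"
  by (cases P; cases V) (simp add: swap_xy_def line_point_def)

lemma line5_shift_xy_subset_Zvar:
  "line5 P V \<subseteq> Zvar I J \<Longrightarrow> line5 (shift_xy l P) (shift_xy l V) \<subseteq> Zvar I J"
  unfolding line5_subset_Zvar_iff by (metis shift_xy_line_point invI_shift_xy invJ_shift_xy)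

lemma line5_swap_xy_subset_Zvar:
  "line5 P V \<subseteq> Zvar I J \<Longrightarrow> line5 (swap_xy P) (swap_xy V) \<subseteq> Zvar I J"
  unfolding line5_subset_Zvar_iff by (metis swap_xy_line_point invI_swap_xy invJ_swap_xy)

text \<open>I and J are quadratic and cubic in t with leading coefficients I(V) and J(V); a second and
  a third central difference isolate these coefficients.\<close>

lemma direction_nullform_if_line5_subset_Zvar:
  assumes "line5 P V \<subseteq> Zvar I J"
  shows "invI V = 0" and "invJ V = 0"
proof -
  obtain a b c d e where P: "P = (a,b,c,d,e)" by (cases P) auto
  obtain A B C D E where V: "V = (A,B,C,D,E)" by (cases V) auto
  have const: "invI (line_point P V t) = I" "invJ (line_point P V t) = J" for t
    using assms by (simp_all add: line5_subset_Zvar_iff)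
  have "invI (line_point P V 1) + invI (line_point P V (-1)) - 2 * invI (line_point P V 0) = 2 * invI V"
    unfolding P V line_point_def invI_def by (simp add: algebra_simps power2_eq_square)
  then show "invI V = 0" by (simp add: const)
  have "invJ (line_point P V 2) - invJ (line_point P V (-2))
      - 2 * (invJ (line_point P V 1) - invJ (line_point P V (-1))) = 12 * invJ V"
    unfolding P V line_point_def invJ_def by (simp add: algebra_simps power2_eq_square power3_eq_cube)
  then show "invJ V = 0" by (simp add: const)
qed

lemma nullform_triple_root_b0:
  assumes A: "A \<noteq> 0" and I: "invI (A,0,C,D,E) = 0" and J: "invJ (A,0,C,D,E) = 0"
  shows "\<exists>r. shift_xy r (A,0,C,D,E) = (A, 4*A*r, 0, 0, 0)"
proof -
  have iv: "12*A*E + C^2 = 0" using I by (simp add: invI_def)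
  have "27*A*D^2 + 8*C^3 = 6*C*(12*A*E + C^2) - (72*A*C*E - 27*A*D^2 - 2*C^3)"
    by (simp add: algebra_simps power2_eq_square power3_eq_cube)
  with iv J have jv: "27*A*D^2 + 8*C^3 = 0" by (simp add: invJ_def)
  show ?thesis
  proof (cases "C = 0")
    case True
    with iv jv A have "D = 0" "E = 0" by simp_all
    with True show ?thesis by (intro exI[of _ 0]) simp
  next
    case False
    define r where "r = -3*D / (4*C)"
    have r: "4*C*r = -3*D" using False by (simp add: r_def)
    have "16*C^2*(6*A*r^2 + C) = 6*A*(4*C*r)^2 + 16*C^3"
      by (simp add: algebra_simps power2_eq_square power3_eq_cube)
    also have "\<dots> = 2*(27*A*D^2 + 8*C^3)"
      unfolding r by (simp add: algebra_simps power2_eq_square power3_eq_cube)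
    finally have c': "6*A*r^2 + C = 0" using jv False by simp
    have "16*C^3*(4*A*r^3 + 2*C*r + D) = A*(4*C*r)^3 + 8*C^3*(4*C*r) + 16*C^3*D"
      by (simp add: algebra_simps power2_eq_square power3_eq_cube)
    also have "\<dots> = -D*(27*A*D^2 + 8*C^3)"
      unfolding r by (simp add: algebra_simps power2_eq_square power3_eq_cube)
    finally have d': "4*A*r^3 + 2*C*r + D = 0" using jv False by simp
    have "256*C^4*(A*r^4 + C*r^2 + D*r + E)
        = A*(4*C*r)^4 + 16*C^3*(4*C*r)^2 + 64*C^3*D*(4*C*r) + 256*C^4*E"
      by (simp add: algebra_simps power2_eq_square power3_eq_cube power4_eq_xxxx)
    also have "\<dots> = 81*A*D^4 - 48*C^3*D^2 + 256*C^4*E"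
      unfolding r by (simp add: algebra_simps power2_eq_square power3_eq_cube power4_eq_xxxx)
    finally have quartic: "256*C^4*(A*r^4 + C*r^2 + D*r + E) = 81*A*D^4 - 48*C^3*D^2 + 256*C^4*E" .
    have "12*A*(81*A*D^4 - 48*C^3*D^2 + 256*C^4*E) = 36*D^2*A*(27*A*D^2 + 8*C^3)
        - 32*C^3*(27*A*D^2 + 8*C^3) + 256*C^4*(12*A*E + C^2)"
      by (simp add: algebra_simps power2_eq_square power3_eq_cube power4_eq_xxxx)
    then have "12*A*(256*C^4*(A*r^4 + C*r^2 + D*r + E)) = 0"
      unfolding quartic iv jv by simp
    then have e': "A*r^4 + C*r^2 + D*r + E = 0" using A False by simp
    show ?thesis using c' d' e' by (intro exI[of _ r]) (simp add: shift_xy_def)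
  qed
qed

lemma nullform_triple_root_a0:
  assumes B: "B \<noteq> 0" and I: "invI (0,B,C,D,E) = 0" and J: "invJ (0,B,C,D,E) = 0"
  shows "\<exists>r. shift_xy r (0,B,C,D,E) = (0, B, 0, 0, 0)"
proof -
  have iv: "C^2 - 3*B*D = 0" using I by (simp add: invI_def)
  have jv: "9*B*C*D - 27*B^2*E - 2*C^3 = 0" using J by (simp add: invJ_def)
  define r where "r = -C / (3*B)"
  have r: "3*B*r = -C" using B by (simp add: r_def)
  then have c': "3*B*r + C = 0" by simp
  have "3*B*(3*B*r^2 + 2*C*r + D) = (3*B*r)^2 + 2*C*(3*B*r) + 3*B*D"
    by (simp add: algebra_simps power2_eq_square)
  also have "\<dots> = -(C^2 - 3*B*D)"
    unfolding r by (simp add: algebra_simps power2_eq_square)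
  finally have d': "3*B*r^2 + 2*C*r + D = 0" using iv B by simp
  have "27*B^2*(B*r^3 + C*r^2 + D*r + E) = (3*B*r)^3 + 3*C*(3*B*r)^2 + 9*B*D*(3*B*r) + 27*B^2*E"
    by (simp add: algebra_simps power2_eq_square power3_eq_cube)
  also have "\<dots> = -(9*B*C*D - 27*B^2*E - 2*C^3)"
    unfolding r by (simp add: algebra_simps power2_eq_square power3_eq_cube)
  finally have e': "B*r^3 + C*r^2 + D*r + E = 0" using jv B by simp
  show ?thesis using c' d' e' by (intro exI[of _ r]) (simp add: shift_xy_def)
qed

text \<open>(A,B,0,0,0) is x^3 (A x + B y): a nonzero nullform has a triple root, and the substitutions
  move it to x = 0.\<close>

lemma nullform_normal_form:
  assumes I: "invI V = 0" and J: "invJ V = 0" and V: "V \<noteq> (0,0,0,0,0)"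
  obtains A B where "A \<noteq> 0 \<or> B \<noteq> 0"
    and "(\<exists>l. shift_xy l V = (A,B,0,0,0)) \<or> swap_xy V = (A,B,0,0,0)"
proof -
  obtain A B C D E where V_eq: "V = (A,B,C,D,E)" by (cases V) auto
  consider "A \<noteq> 0" | "A = 0" "B \<noteq> 0" | "A = 0" "B = 0" by blast
  then show ?thesis
  proof cases
    case 1
    define l where "l = -B / (4*A)"
    obtain C' D' E' where shifted: "shift_xy l V = (A,0,C',D',E')"
      using 1 by (simp add: V_eq l_def shift_xy_def)
    have "invI (A,0,C',D',E') = 0" "invJ (A,0,C',D',E') = 0"
      using I J by (simp_all flip: shifted)
    then obtain r where "shift_xy r (A,0,C',D',E') = (A, 4*A*r, 0, 0, 0)"
      using nullform_triple_root_b0 1 by blast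
    then have "shift_xy (l + r) V = (A, 4*A*r, 0, 0, 0)"
      by (simp add: shifted flip: shift_xy_shift_xy)
    then show ?thesis using that 1 by blast
  next
    case 2
    then show ?thesis using that nullform_triple_root_a0 I J unfolding V_eq by blast
  next
    case 3
    then have "C = 0" using I by (simp add: V_eq invI_def)
    then have "swap_xy V = (E,D,0,0,0)" "E \<noteq> 0 \<or> D \<noteq> 0"
      using 3 V by (auto simp: V_eq swap_xy_def)
    then show ?thesis using that by blast
  qed
qed

lemma line5_subset_Zvar_normal_direction:
  assumes L: "line5 P V \<subseteq> Zvar I J" and V: "V \<noteq> (0,0,0,0,0)"
  obtains P' A B where "line5 P' (A,B,0,0,0) \<subseteq> Zvar I J" and "A \<noteq> 0 \<or> B \<noteq> 0"
proof -
  obtain A B where AB: "A \<noteq> 0 \<or> B \<noteq> 0"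
    and normal: "(\<exists>l. shift_xy l V = (A,B,0,0,0)) \<or> swap_xy V = (A,B,0,0,0)"
    using nullform_normal_form direction_nullform_if_line5_subset_Zvar[OF L] V by metis
  from normal show ?thesis
  proof
    assume "\<exists>l. shift_xy l V = (A,B,0,0,0)"
    then show ?thesis using line5_shift_xy_subset_Zvar[OF L] that AB by metis
  next
    assume "swap_xy V = (A,B,0,0,0)"
    then show ?thesis using line5_swap_xy_subset_Zvar[OF L] that AB by metis
  qed
qed

lemma line5_subset_Zvar_x3_direction:
  assumes L: "line5 (a,b,c,d,e) (A,B,0,0,0) \<subseteq> Zvar I J" and AB: "A \<noteq> 0 \<or> B \<noteq> 0"
  shows "d = 0" and "e = 0"
proof -
  let ?p = "line_point (a,b,c,d,e) (A,B,0,0,0)"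
  have const: "invI (?p t) = I" "invJ (?p t) = J" for t
    using L by (simp_all add: line5_subset_Zvar_iff)
  have "invI (?p 1) - invI (?p 0) = 12*A*e - 3*B*d"
    unfolding line_point_def invI_def by (simp add: algebra_simps power2_eq_square)
  then have e1: "12*A*e - 3*B*d = 0" by (simp add: const)
  have "invJ (?p 1) + invJ (?p (-1)) - 2 * invJ (?p 0) = -54*B^2*e"
    unfolding line_point_def invJ_def by (simp add: algebra_simps power2_eq_square power3_eq_cube)
  then have e2: "B^2*e = 0" by (simp add: const)
  have "invJ (?p 1) - invJ (?p (-1)) = 144*A*c*e + 18*B*c*d - 54*A*d^2 - 108*B*b*e"
    unfolding line_point_def invJ_def by (simp add: algebra_simps power2_eq_square power3_eq_cube)
  then have e3: "144*A*c*e + 18*B*c*d - 54*A*d^2 - 108*B*b*e = 0" by (simp add: const)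
  have "d = 0 \<and> e = 0"
  proof (cases "B = 0")
    case True
    with AB e1 e3 show ?thesis by simp
  next
    case False
    with e1 e2 show ?thesis by simp
  qed
  then show "d = 0" and "e = 0" by simp_all
qed

text \<open>Here the quartic is divisible by y^2.\<close>

lemma discriminant_zero_if_double_root: "4 * invI (a,b,c,0,0)^3 = invJ (a,b,c,0,0)^2"
  by (simp add: invI_def invJ_def algebra_simps power2_eq_square power3_eq_cube)

theorem theoremC1:
  fixes I J :: complex
  assumes "4 * I^3 - J^2 \<noteq> 0"
  shows "\<not> (\<exists>P V. V \<noteq> (0,0,0,0,0) \<and> line5 P V \<subseteq> Zvar I J)"
proof
  assume "\<exists>P V. V \<noteq> (0,0,0,0,0) \<and> line5 P V \<subseteq> Zvar I J"
  then obtain P' A B where L: "line5 P' (A,B,0,0,0) \<subseteq> Zvar I J" and AB: "A \<noteq> 0 \<or> B \<noteq> 0"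
    using line5_subset_Zvar_normal_direction by metis
  obtain a b c d e where P': "P' = (a,b,c,d,e)" by (cases P') auto
  have "d = 0" "e = 0" using line5_subset_Zvar_x3_direction L AB unfolding P' by blast+
  moreover have "invI P' = I" "invJ P' = J"
    using spec[OF L[unfolded line5_subset_Zvar_iff], of 0] by (simp_all add: line_point_0)
  ultimately have "4 * I^3 - J^2 = 0"
    using discriminant_zero_if_double_root[of a b c] by (simp add: P')
  with assms show False by simp
qed

end
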